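(* Let $\mathbf b^{(1)}=(b_5^{-1},b_6^{-1},b_7^{-1},b_8^{-1},b_1^{-1},b_2^{-1},b_3^{-1},b_4^{-1})$. Then, as identities of formal series in $t$ whose coefficients are Laurent series in $\phi$, $$f^{0,+}(t,\phi;\Lambda,\mathbf b)\,f^{0,+}\!\Big(t,\frac1{t\phi};\frac1\Lambda,\mathbf b^{(1)}\Big)=t,\qquad g^{0,+}(t,\phi;\Lambda,\mathbf b)\,g^{0,+}\!\Big(t,\frac1{t\phi};\frac1\Lambda,\mathbf b^{(1)}\Big)=t,$$ where $f^{0,+}(t,\psi;\Lambda',\mathbf b')=\sum_{n\ge1}\sum_{i\le n}F^{0,+}_{n,i}(\Lambda',\mathbf b')\psi^it^n$ (similarly for $g^{0,+}$), and the substitution $\psi=1/(t\phi)$ is made termwise (the coefficient of each $t^m$ is then a Laurent series in $\phi$ with exponents $\le m-1$).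
   Context: Parameters $\mathbf b=(b_1,\dots,b_8)\in(\mathbb C^* )^8$, $q=\frac{b_1b_2b_3b_4}{b_5b_6b_7b_8}$ (note $q(\mathbf b^{(1)})=q(\mathbf b)$). The equation $q$-$P(A_1)$ for $f=f(t)$, $g=g(t)$ is $$(gf-t^2)(g\bar f-qt^2)(g-b_5)(g-b_6)(g-b_7)(g-b_8)=(gf-1)(g\bar f-1)(g-b_1t)(g-b_2t)(g-b_3t)(g-b_4t),$$ $$(g\bar f-qt^2)(\bar g\bar f-q^2t^2)(\bar f-b_5^{-1})(\bar f-b_6^{-1})(\bar f-b_7^{-1})(\bar f-b_8^{-1})=(g\bar f-1)(\bar g\bar f-1)(\bar f-b_1^{-1}qt)(\bar f-b_2^{-1}qt)(\bar f-b_3^{-1}qt)(\bar f-b_4^{-1}qt).$$ Formal setting: $\Lambda,\phi$ are indeterminates, $\lambda=\Lambda^2/(b_1b_2b_3b_4)$; formal solutions are pairs $f=\sum_{n\ge1}\sum_{i\le n}F_{n,i}\phi^it^n$, $g=\sum_{n\ge1}\sum_{i\le n}G_{n,i}\phi^it^n$ with coefficients rational in $(\Lambda,\mathbf b)$ satisfying both equations identically under the shift $t\mapsto qt$, $\phi\mapsto\lambda\phi$, $\Lambda\mapsto\Lambda$. $(f^{0,+}(t,\phi;\Lambda,\mathbf b),g^{0,+}(t,\phi;\Lambda,\mathbf b))$ denotes the unique such solution with $F_{1,1}=1$, $G_{1,1}=\Lambda$, with coefficients $F^{0,+}_{n,i}(\Lambda,\mathbf b),G^{0,+}_{n,i}(\Lambda,\mathbf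 b)$. *)

theory Defs
  imports "HOL-Computational_Algebra.Formal_Power_Series" "HOL-Computational_Algebra.Formal_Laurent_Series"
begin

text \<open>
  A formal double series  sum_n sum_i c(n,i) phi^i t^n  (i ranging over the integers,
  bounded above for each n) is represented as an element of  ('a fls) fps :
  the coefficient of t^n is a formal Laurent series in the variable u = 1/phi,
  so the coefficient of phi^i t^n is  fls_nth (f $ n) (-i).
  The parameters b_1,...,b_8 are  b 1, ..., b 8  (values of b at other indices are irrelevant).
  The coefficient field is an arbitrary field 'a (in the paper: rational functions in Lambda, b).
\<close>

definition coef :: "('a::zero) fls fps \<Rightarrow> nat \<Rightarrow> int \<Rightarrow> 'a" where
  "coef f n i = fls_nth (f $ n) (- i)"

definition qpar :: "(nat \<Rightarrow> 'a::field) \<Rightarrow> 'a" where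
  "qpar b = (b 1 * b 2 * b 3 * b 4) / (b 5 * b 6 * b 7 * b 8)"

definition lampar :: "'a::field \<Rightarrow> (nat \<Rightarrow> 'a) \<Rightarrow> 'a" where
  "lampar \<Lambda> b = \<Lambda>^2 / (b 1 * b 2 * b 3 * b 4)"

definition bdual :: "(nat \<Rightarrow> 'a::field) \<Rightarrow> nat \<Rightarrow> 'a" where
  "bdual b i = (if 1 \<le> i \<and> i \<le> 4 then inverse (b (i + 4))
                else if 5 \<le> i \<and> i \<le> 8 then inverse (b (i - 4)) else 0)"

definition admissible :: "('a::zero) fls fps \<Rightarrow> bool" where
  "admissible f \<longleftrightarrow> f $ 0 = 0 \<and> (\<forall>n i. coef f n i \<noteq> 0 \<longrightarrow> i \<le> int n)"

text \<open>The shift t -> q t, phi -> l phi (Lambda fixed): phi^i t^n gets the factor l^i q^n.\<close>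
definition tshift :: "'a::field \<Rightarrow> 'a \<Rightarrow> 'a fls fps \<Rightarrow> 'a fls fps" where
  "tshift q l f = Abs_fps (\<lambda>n. Abs_fls (\<lambda>k. q ^ n * l powi (- k) * fls_nth (f $ n) k))"

definition cst :: "'a::field \<Rightarrow> 'a fls fps" where
  "cst c = fps_const (fls_const c)"

definition qPA1 :: "'a::field \<Rightarrow> (nat \<Rightarrow> 'a) \<Rightarrow> 'a fls fps \<Rightarrow> 'a fls fps \<Rightarrow> bool" where
  "qPA1 \<Lambda> b f g \<longleftrightarrow>
     (let q = qpar b; l = lampar \<Lambda> b; t = (fps_X :: 'a fls fps);
          fb = tshift q l f; gb = tshift q l g in
      (g * f - t^2) * (g * fb - cst q * t^2)
        * (g - cst (b 5)) * (g - cst (b 6)) * (g - cst (b 7)) * (g - cst (b 8))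
      = (g * f - 1) * (g * fb - 1)
        * (g - cst (b 1) * t) * (g - cst (b 2) * t) * (g - cst (b 3) * t) * (g - cst (b 4) * t)
      \<and>
      (g * fb - cst q * t^2) * (gb * fb - cst (q^2) * t^2)
        * (fb - cst (inverse (b 5))) * (fb - cst (inverse (b 6)))
        * (fb - cst (inverse (b 7))) * (fb - cst (inverse (b 8)))
      = (g * fb - 1) * (gb * fb - 1)
        * (fb - cst (inverse (b 1) * q) * t) * (fb - cst (inverse (b 2) * q) * t)
        * (fb - cst (inverse (b 3) * q) * t) * (fb - cst (inverse (b 4) * q) * t))"

definition sol0plus :: "'a::field \<Rightarrow> (nat \<Rightarrow> 'a) \<Rightarrow> 'a fls fps \<times> 'a fls fps \<Rightarrow> bool" where
  "sol0plus \<Lambda> b p \<longleftrightarrow> admissible (fst p) \<and> admissible (snd p) \<and> qPA1 \<Lambda> b (fst p) (snd p)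
      \<and> coef (fst p) 1 1 = 1 \<and> coef (snd p) 1 1 = \<Lambda>"

definition f0plus :: "'a::field \<Rightarrow> (nat \<Rightarrow> 'a) \<Rightarrow> 'a fls fps" where
  "f0plus \<Lambda> b = fst (THE p. sol0plus \<Lambda> b p)"

definition g0plus :: "'a::field \<Rightarrow> (nat \<Rightarrow> 'a) \<Rightarrow> 'a fls fps" where
  "g0plus \<Lambda> b = snd (THE p. sol0plus \<Lambda> b p)"

text \<open>Termwise substitution psi = 1/(t phi):  c(n,i) psi^i t^n  becomes  c(n,i) phi^(-i) t^(n-i).
  Hence the coefficient of t^m phi^(-k) (i.e. of t^m u^k) is c(m+k, k).\<close>
definition subst_inv :: "('a::zero) fls fps \<Rightarrow> 'a fls fps" where
  "subst_inv f = Abs_fps (\<lambda>m. Abs_fls (\<lambda>k. if int m + k \<ge> 0 then coef f (nat (int m + k)) k else 0))"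

end

theory Submission
  imports Defs
begin

unbundle fps_syntax

text \<open>
  Write u = 1/phi, so the series are power series in t with Laurent coefficients in u.
  The substitution psi = 1/(t phi) maps series whose monomials u^k t^n all have n + k >= 0 to
  series of the same kind and is multiplicative on them. It turns the shift t -> q t, phi -> l phi
  into t -> q t, phi -> phi/(q l), and for the dual parameters (1/Lambda, b^(1)) this is the shift
  of the original parameters. Hence F = f^{0,+}(t, 1/(t phi); 1/Lambda, b^(1)) and the analogous G
  satisfy the dual equations with the original shift. These go over into q-P(A_1) for (Lambda, b)
  under the rational symmetry (f, g) -> (t/f, t/g), so (t/F, t/G) is a formal solution for
  (Lambda, b) with the right normalisation, and uniqueness identifies it with (f^{0,+}, g^{0,+}).
\<close>

lemma fls_times_nth_window:
  fixes x y :: "'a::field fls"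
  assumes "\<And>k. k < a \<Longrightarrow> x $$ k = 0" "\<And>k. k < b \<Longrightarrow> y $$ k = 0"
  shows "(x * y) $$ n = (\<Sum>i=a..n-b. x $$ i * y $$ (n - i))"
proof (cases "x = 0 \<or> y = 0")
  case True
  then show ?thesis by auto
next
  case False
  then have "a \<le> fls_subdegree x" "b \<le> fls_subdegree y"
    using assms by (auto intro: fls_subdegree_geI)
  then show ?thesis
    unfolding fls_times_nth(2)[of x y n] by (intro sum.mono_neutral_left) auto
qed

lemma fls_times_nth_eq_0_below:
  fixes x y :: "'a::field fls"
  assumes "\<And>k. k < a \<Longrightarrow> x $$ k = 0" "\<And>k. k < b \<Longrightarrow> y $$ k = 0" "n < a + b"
  shows "(x * y) $$ n = 0"
  using fls_times_nth_window[of a x b y n, OF assms(1,2)] assms(3) by simp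

lemma fls_times_nth_nonneg:
  fixes x y :: "'a::field fls"
  assumes "\<And>k. k < 0 \<Longrightarrow> x $$ k = 0" "\<And>k. k < 0 \<Longrightarrow> y $$ k = 0"
  shows "(x * y) $$ int N = (\<Sum>i\<le>N. x $$ int i * y $$ int (N - i))"
proof -
  have "(x * y) $$ int N = (\<Sum>i=0..int N. x $$ i * y $$ (int N - i))"
    using fls_times_nth_window[of 0 x 0 y "int N", OF assms] by simp
  also have "\<dots> = (\<Sum>i\<le>N. x $$ int i * y $$ int (N - i))"
    by (rule sum.reindex_bij_witness[of _ int nat]) (auto simp: of_nat_diff)
  finally show ?thesis .
qed

definition total_order_ge :: "int \<Rightarrow> 'a::zero fls fps \<Rightarrow> bool" where
  "total_order_ge d h \<longleftrightarrow> (\<forall>n k. k < d - int n \<longrightarrow> h $ n $$ k = 0)"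

lemma total_order_geD: "total_order_ge d h \<Longrightarrow> k < d - int n \<Longrightarrow> h $ n $$ k = 0"
  unfolding total_order_ge_def by blast

lemma total_order_ge_mult:
  fixes f g :: "'a::field fls fps"
  assumes "total_order_ge a f" "total_order_ge b g"
  shows "total_order_ge (a + b) (f * g)"
  unfolding total_order_ge_def
proof (intro allI impI)
  fix n k
  assume k: "k < a + b - int n"
  have "(f$i * g$(n-i)) $$ k = 0" if "i \<in> {0..n}" for i
    by (rule fls_times_nth_eq_0_below[of "a - int i" _ "b - int (n - i)"])
       (use assms that k in \<open>auto intro: total_order_geD\<close>)
  then show "(f * g) $ n $$ k = 0"
    by (simp add: fps_mult_nth fls_nth_sum)
qed

lemma total_order_ge_0_mult [simp]:
  "total_order_ge 0 f \<Longrightarrow> total_order_ge 0 g \<Longrightarrow> total_order_ge 0 (f * g :: 'a::field fls fps)"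
  using total_order_ge_mult[of 0 f 0 g] by simp

lemma total_order_ge_one [simp]: "total_order_ge 0 (1 :: 'a::field fls fps)"
  by (auto simp: total_order_ge_def fps_one_nth)

lemma total_order_ge_0_power [simp]:
  "total_order_ge 0 f \<Longrightarrow> total_order_ge 0 (f ^ n :: 'a::field fls fps)"
  by (induction n) simp_all

lemma total_order_ge_diff [simp]:
  "total_order_ge d f \<Longrightarrow> total_order_ge d g \<Longrightarrow> total_order_ge d (f - g :: 'a::field fls fps)"
  by (auto simp: total_order_ge_def)

lemma total_order_ge_cst [simp]: "total_order_ge 0 (cst c)"
  by (auto simp: total_order_ge_def cst_def)

lemma total_order_ge_X [simp]: "total_order_ge 0 (fps_X :: 'a::field fls fps)"
  by (auto simp: total_order_ge_def fps_X_def)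

lemma admissible_total_order_ge: "admissible f \<Longrightarrow> total_order_ge 0 f"
  unfolding admissible_def total_order_ge_def coef_def
  by (metis add.inverse_inverse diff_0 neg_less_iff_less not_less)

definition fls_dilate :: "'a::field \<Rightarrow> 'a fls \<Rightarrow> 'a fls" where
  "fls_dilate l x = Abs_fls (\<lambda>k. l powi (- k) * x $$ k)"

lemma Abs_fls_scaled_nth: "Abs_fls (\<lambda>k. c k * x $$ k) $$ n = c n * (x::'a::field fls) $$ n"
  by (rule nth_Abs_fls_lower_bound[of "fls_subdegree x"]) auto

lemma fls_dilate_nth: "fls_dilate l x $$ k = l powi (- k) * x $$ k"
  by (simp add: fls_dilate_def Abs_fls_scaled_nth)

lemma fls_dilate_mult:
  fixes x y :: "'a::field fls"
  assumes "l \<noteq> 0"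
  shows "fls_dilate l (x * y) = fls_dilate l x * fls_dilate l y"
proof (rule fls_eqI)
  fix n
  let ?a = "fls_subdegree x" and ?b = "fls_subdegree y"
  have "(fls_dilate l x * fls_dilate l y) $$ n
      = (\<Sum>i=?a..n-?b. (l powi (- i) * x $$ i) * (l powi (- (n - i)) * y $$ (n - i)))"
    by (subst fls_times_nth_window[of ?a _ ?b]) (auto simp: fls_dilate_nth)
  also have "\<dots> = (\<Sum>i=?a..n-?b. l powi (- n) * (x $$ i * y $$ (n - i)))"
  proof (rule sum.cong[OF refl])
    fix i
    have "l powi (- i) * l powi (- (n - i)) = l powi (- n)"
      using assms by (simp add: power_int_add[symmetric])
    then show "(l powi (- i) * x $$ i) * (l powi (- (n - i)) * y $$ (n - i))
        = l powi (- n) * (x $$ i * y $$ (n - i))"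
      by (metis mult.assoc mult.left_commute)
  qed
  also have "\<dots> = fls_dilate l (x * y) $$ n"
    by (simp add: fls_dilate_nth sum_distrib_left fls_times_nth_window[of ?a _ ?b])
  finally show "fls_dilate l (x * y) $$ n = (fls_dilate l x * fls_dilate l y) $$ n" ..
qed

lemma tshift_nth: "tshift q l f $ n $$ k = q ^ n * l powi (- k) * f $ n $$ k"
  using Abs_fls_scaled_nth[of "\<lambda>k. q ^ n * l powi (- k)" "f $ n" k] by (simp add: tshift_def)

lemma tshift_nth_eq: "tshift q l f $ n = fls_const (q ^ n) * fls_dilate l (f $ n)"
  by (rule fls_eqI) (simp add: tshift_nth fls_dilate_nth mult.assoc)

lemma tshift_mult:
  fixes f g :: "'a::field fls fps"
  assumes "l \<noteq> 0"
  shows "tshift q l (f * g) = tshift q l f * tshift q l g"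
proof (rule fps_ext)
  fix n
  have "tshift q l f $ i * tshift q l g $ (n - i)
      = fls_const (q ^ n) * fls_dilate l (f $ i * g $ (n - i))" if "i \<le> n" for i
    using that assms
    by (simp add: tshift_nth_eq fls_dilate_mult fls_const_mult_const power_add[symmetric] ac_simps)
  then show "tshift q l (f * g) $ n = (tshift q l f * tshift q l g) $ n"
    by (intro fls_eqI)
       (simp add: fps_mult_nth fls_nth_sum tshift_nth fls_dilate_nth sum_distrib_left mult.assoc)
qed

lemma tshift_X: "tshift q l (fps_X :: 'a::field fls fps) = cst q * fps_X"
  by (intro fps_ext fls_eqI) (simp add: tshift_nth cst_def fps_X_def)

lemma total_order_ge_tshift: "total_order_ge d f \<Longrightarrow> total_order_ge d (tshift q l f)"
  by (simp add: total_order_ge_def tshift_nth)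

text \<open>subst_inv factors as t \<mapsto> t u, then the exchange of t and u, then t \<mapsto> t/u; the outer two
  are ring homomorphisms and the exchange is one on series without negative powers of u.\<close>

definition subst_t_times_u :: "'a::field fls fps \<Rightarrow> 'a fls fps" where
  "subst_t_times_u h = Abs_fps (\<lambda>n. fls_shift (- int n) (h $ n))"

definition subst_t_div_u :: "'a::field fls fps \<Rightarrow> 'a fls fps" where
  "subst_t_div_u h = Abs_fps (\<lambda>n. fls_shift (int n) (h $ n))"

definition swap_tu :: "'a::field fls fps \<Rightarrow> 'a fls fps" where
  "swap_tu h = Abs_fps (\<lambda>m. Abs_fls (\<lambda>j. if 0 \<le> j then h $ nat j $$ int m else 0))"

definition no_neg_powers :: "'a::zero fls fps \<Rightarrow> bool" where
  "no_neg_powers h \<longleftrightarrow> (\<forall>n k. k < 0 \<longrightarrow> h $ n $$ k = 0)"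

lemma swap_tu_nth: "swap_tu h $ m $$ j = (if 0 \<le> j then h $ nat j $$ int m else 0)"
  unfolding swap_tu_def by (simp add: nth_Abs_fls_lower_bound[of 0])

lemma subst_inv_nth:
  "subst_inv h $ m $$ k = (if 0 \<le> int m + k then h $ nat (int m + k) $$ (- k) else 0)"
  unfolding subst_inv_def coef_def by (simp add: nth_Abs_fls_lower_bound[of "- int m"])

lemma subst_inv_factorization: "subst_inv h = subst_t_div_u (swap_tu (subst_t_times_u h))"
  by (intro fps_ext fls_eqI)
     (simp add: subst_inv_nth subst_t_div_u_def subst_t_times_u_def swap_tu_nth algebra_simps)

lemma fls_shift_sum: "fls_shift m (\<Sum>i\<in>A. f i) = (\<Sum>i\<in>A. fls_shift m (f i))"
  by (intro fls_eqI) (simp add: fls_nth_sum)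

lemma fls_shift_times_shift: "fls_shift a x * fls_shift b y = fls_shift (a + b) (x * (y :: 'a::field fls))"
  by (simp add: fls_shifted_times_simps add.commute)

lemma subst_t_times_u_mult: "subst_t_times_u (f * g) = subst_t_times_u f * subst_t_times_u g"
proof (rule fps_ext)
  fix n
  have "subst_t_times_u (f * g) $ n = (\<Sum>i=0..n. fls_shift (- int n) (f $ i * g $ (n - i)))"
    by (simp add: subst_t_times_u_def fps_mult_nth fls_shift_sum)
  also have "\<dots> = (\<Sum>i=0..n. fls_shift (- int i) (f $ i) * fls_shift (- int (n - i)) (g $ (n - i)))"
    by (intro sum.cong) (auto simp: fls_shift_times_shift of_nat_diff)
  finally show "subst_t_times_u (f * g) $ n = (subst_t_times_u f * subst_t_times_u g) $ n"
    by (simp add: subst_t_times_u_def fps_mult_nth)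
qed

lemma subst_t_div_u_mult: "subst_t_div_u (f * g) = subst_t_div_u f * subst_t_div_u g"
proof (rule fps_ext)
  fix n
  have "subst_t_div_u (f * g) $ n = (\<Sum>i=0..n. fls_shift (int n) (f $ i * g $ (n - i)))"
    by (simp add: subst_t_div_u_def fps_mult_nth fls_shift_sum)
  also have "\<dots> = (\<Sum>i=0..n. fls_shift (int i) (f $ i) * fls_shift (int (n - i)) (g $ (n - i)))"
    by (intro sum.cong) (auto simp: fls_shift_times_shift of_nat_diff)
  finally show "subst_t_div_u (f * g) $ n = (subst_t_div_u f * subst_t_div_u g) $ n"
    by (simp add: subst_t_div_u_def fps_mult_nth)
qed

lemma no_neg_powers_subst_t_times_u: "total_order_ge 0 h \<Longrightarrow> no_neg_powers (subst_t_times_u h)"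
  by (auto simp: no_neg_powers_def subst_t_times_u_def total_order_ge_def)

lemma swap_tu_mult:
  fixes f g :: "'a::field fls fps"
  assumes f: "no_neg_powers f" and g: "no_neg_powers g"
  shows "swap_tu (f * g) = swap_tu f * swap_tu g"
proof (intro fps_ext fls_eqI)
  fix m j
  have swap_neg: "swap_tu h $ i $$ k = 0" if "k < 0" for h i k
    using that by (simp add: swap_tu_nth)
  have f_neg: "f $ i $$ k = 0" and g_neg: "g $ i $$ k = 0" if "k < 0" for i k
    using f g that by (auto simp: no_neg_powers_def)
  show "swap_tu (f * g) $ m $$ j = (swap_tu f * swap_tu g) $ m $$ j"
  proof (cases "0 \<le> j")
    case False
    then show ?thesis
      by (simp add: swap_tu_nth fps_mult_nth fls_nth_sum fls_times_nth_eq_0_below[of 0 _ 0] swap_neg)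
  next
    case True
    then obtain J where J: "j = int J" by (metis nonneg_eq_int)
    have "swap_tu (f * g) $ m $$ j = (\<Sum>c\<le>J. (f $ c * g $ (J - c)) $$ int m)"
      by (simp add: swap_tu_nth J fps_mult_nth fls_nth_sum atMost_atLeast0)
    also have "\<dots> = (\<Sum>c\<le>J. \<Sum>a\<le>m. f $ c $$ int a * g $ (J - c) $$ int (m - a))"
      by (intro sum.cong refl fls_times_nth_nonneg f_neg g_neg)
    also have "\<dots> = (\<Sum>a\<le>m. \<Sum>c\<le>J. f $ c $$ int a * g $ (J - c) $$ int (m - a))"
      by (rule sum.swap)
    also have "\<dots> = (\<Sum>a\<le>m. (swap_tu f $ a * swap_tu g $ (m - a)) $$ j)"
      by (intro sum.cong refl, subst J, subst fls_times_nth_nonneg)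
         (auto simp: swap_neg swap_tu_nth nat_diff_distrib intro!: sum.cong)
    also have "\<dots> = (swap_tu f * swap_tu g) $ m $$ j"
      by (simp add: fps_mult_nth fls_nth_sum atMost_atLeast0)
    finally show ?thesis .
  qed
qed

lemma subst_inv_mult:
  fixes f g :: "'a::field fls fps"
  assumes "total_order_ge 0 f" "total_order_ge 0 g"
  shows "subst_inv (f * g) = subst_inv f * subst_inv g"
  using assms
  by (simp add: subst_inv_factorization subst_t_times_u_mult swap_tu_mult
      no_neg_powers_subst_t_times_u subst_t_div_u_mult)

lemma subst_inv_diff: "subst_inv (f - g) = subst_inv f - subst_inv (g :: 'a::field fls fps)"
  by (intro fps_ext fls_eqI) (simp add: subst_inv_nth)

lemma subst_inv_cst: "subst_inv (cst c) = (cst c :: 'a::field fls fps)"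
  by (intro fps_ext fls_eqI) (auto simp: subst_inv_nth cst_def)

lemma subst_inv_X: "subst_inv fps_X = (fps_X :: 'a::field fls fps)"
  by (intro fps_ext fls_eqI) (auto simp: subst_inv_nth fps_X_def)

lemma subst_inv_one: "subst_inv 1 = (1 :: 'a::field fls fps)"
  using subst_inv_cst[of 1] by (simp add: cst_def)

lemma subst_inv_power:
  "total_order_ge 0 f \<Longrightarrow> subst_inv (f ^ n) = subst_inv (f :: 'a::field fls fps) ^ n"
  by (induction n) (simp_all add: subst_inv_one subst_inv_mult)

lemma subst_inv_tshift:
  fixes h :: "'a::field fls fps"
  assumes "q \<noteq> 0" "l' \<noteq> 0" "l = inverse (q * l')"
  shows "subst_inv (tshift q l' h) = tshift q l (subst_inv h)"
proof (intro fps_ext fls_eqI)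
  fix m k
  show "subst_inv (tshift q l' h) $ m $$ k = tshift q l (subst_inv h) $ m $$ k"
  proof (cases "0 \<le> int m + k")
    case True
    have "q ^ nat (int m + k) = q ^ m * q powi k"
      using True by (metis power_int_add power_int_of_nat int_nat_eq assms(1))
    moreover have "l powi (- k) = q powi k * l' powi k"
      using assms by (simp add: power_int_minus power_int_inverse power_int_mult_distrib)
    ultimately show ?thesis
      using True by (simp add: subst_inv_nth tshift_nth)
  qed (simp add: subst_inv_nth tshift_nth)
qed

lemma admissible_if_times_eq_X:
  fixes F H :: "'a::field fls fps"
  assumes FH: "F * H = fps_X" and F1: "total_order_ge 1 F" and F01: "F $ 0 $$ 1 \<noteq> 0"
  shows "admissible H"
proof -
  have F0: "F $ 0 \<noteq> 0"
    using F01 by auto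
  have sd: "fls_subdegree (F $ 0) = 1"
    by (rule fls_subdegree_eqI[OF F01]) (use F1 in \<open>auto simp: total_order_ge_def\<close>)
  have "\<forall>k < - int n. H $ n $$ k = 0" for n
  proof (induction n rule: less_induct)
    case (less n)
    have "F $ 0 * H $ n = fps_X $ n - (\<Sum>i=Suc 0..n. F $ i * H $ (n - i))"
      using arg_cong[OF FH, of "\<lambda>h. h $ n"]
      unfolding fps_mult_nth by (simp add: sum.atLeast_Suc_atMost algebra_simps)
    moreover have "(F $ i * H $ (n - i)) $$ k = 0"
      if "i \<in> {Suc 0..n}" "k < 1 - int n" for i k
      by (rule fls_times_nth_eq_0_below[of "1 - int i" _ "- int (n - i)"])
         (use F1 less.IH that in \<open>auto simp: total_order_ge_def\<close>)
    ultimately have low: "(F $ 0 * H $ n) $$ k = 0" if "k < 1 - int n" for k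
      using that by (auto simp: fls_nth_sum fps_X_def)
    show ?case
    proof (cases "H $ n = 0")
      case False
      then have "(F $ 0 * H $ n) $$ fls_subdegree (F $ 0 * H $ n) \<noteq> 0"
        using F0 by (intro nth_fls_subdegree_nonzero) simp
      then have "\<not> fls_subdegree (F $ 0 * H $ n) < 1 - int n"
        using low by blast
      then have "- int n \<le> fls_subdegree (H $ n)"
        using False F0 sd by simp
      then show ?thesis by simp
    qed simp
  qed
  moreover have "H $ 0 = 0"
    using arg_cong[OF FH, of "\<lambda>h. h $ 0"] F0 by simp
  ultimately show ?thesis
    unfolding admissible_def coef_def by (metis neg_less_iff_less not_le)
qed

lemma coef_X_times_inverse:
  fixes F :: "'a::field fls fps"
  assumes "total_order_ge 1 F" "F $ 0 $$ 1 \<noteq> 0"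
  shows "coef (fps_X * inverse F) 1 1 = inverse (F $ 0 $$ 1)"
proof -
  have "F $ 0 \<noteq> 0"
    using assms(2) by auto
  moreover have "fls_subdegree (F $ 0) = 1"
    by (rule fls_subdegree_eqI[OF assms(2)]) (use assms(1) in \<open>auto simp: total_order_ge_def\<close>)
  ultimately show ?thesis
    using fls_inverse_base[of "F $ 0"] by (simp add: coef_def)
qed

lemma total_order_ge_1_subst_inv: "admissible f \<Longrightarrow> total_order_ge 1 (subst_inv f)"
  by (auto simp: total_order_ge_def subst_inv_nth admissible_def nat_eq_iff)

lemma subst_inv_nth_0_1: "subst_inv f $ 0 $$ 1 = coef f 1 1"
  by (simp add: subst_inv_nth coef_def)

text \<open>The system q-P(A_1) in an arbitrary commutative ring: t, q, the b_i and the b_i^-1 are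
  passed as ring elements (B and B'), and fb, gb stand for the shifted unknowns.\<close>
definition qPA1_rel :: "'r::comm_ring_1 \<Rightarrow> 'r \<Rightarrow> (nat \<Rightarrow> 'r) \<Rightarrow> (nat \<Rightarrow> 'r) \<Rightarrow> 'r \<Rightarrow> 'r \<Rightarrow> 'r \<Rightarrow> 'r \<Rightarrow> bool"
  where "qPA1_rel t q B B' f g fb gb \<longleftrightarrow>
    (g * f - t^2) * (g * fb - q * t^2) * (g - B 5) * (g - B 6) * (g - B 7) * (g - B 8)
      = (g * f - 1) * (g * fb - 1) * (g - B 1 * t) * (g - B 2 * t) * (g - B 3 * t) * (g - B 4 * t)
    \<and> (g * fb - q * t^2) * (gb * fb - q^2 * t^2)
        * (fb - B' 5) * (fb - B' 6) * (fb - B' 7) * (fb - B' 8)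
      = (g * fb - 1) * (gb * fb - 1)
        * (fb - B' 1 * q * t) * (fb - B' 2 * q * t) * (fb - B' 3 * q * t) * (fb - B' 4 * q * t)"

lemma cst_mult: "cst (x * y) = cst x * (cst y :: 'a::field fls fps)"
  by (simp add: cst_def fls_const_mult_const)

lemma qPA1_iff_qPA1_rel:
  "qPA1 \<Lambda> b f g \<longleftrightarrow>
     qPA1_rel fps_X (cst (qpar b)) (\<lambda>i. cst (b i)) (\<lambda>i. cst (inverse (b i))) f g
       (tshift (qpar b) (lampar \<Lambda> b) f) (tshift (qpar b) (lampar \<Lambda> b) g)"
  by (simp add: qPA1_def qPA1_rel_def Let_def cst_mult power2_eq_square)

lemma qPA1_rel_fps_to_fls_iff:
  fixes t q f g fb gb :: "'a::comm_ring_1 fps"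
  shows "qPA1_rel (fps_to_fls t) (fps_to_fls q) (fps_to_fls \<circ> B) (fps_to_fls \<circ> B')
           (fps_to_fls f) (fps_to_fls g) (fps_to_fls fb) (fps_to_fls gb)
         \<longleftrightarrow> qPA1_rel t q B B' f g fb gb"
  by (simp add: qPA1_rel_def fps_to_fls_eq_iff[symmetric] fls_times_fps_to_fls fps_to_fls_power
      del: fps_to_fls_eq_iff)

lemma qPA1_rel_subst_inv:
  fixes f g :: "'a::field fls fps"
  assumes "qPA1_rel fps_X (cst q) (\<lambda>i. cst (B i)) (\<lambda>i. cst (B' i)) f g (tshift q l' f) (tshift q l' g)"
    and "total_order_ge 0 f" "total_order_ge 0 g" "q \<noteq> 0" "l' \<noteq> 0" "l = inverse (q * l')"
  shows "qPA1_rel fps_X (cst q) (\<lambda>i. cst (B i)) (\<lambda>i. cst (B' i)) (subst_inv f) (subst_inv g)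
           (tshift q l (subst_inv f)) (tshift q l (subst_inv g))"
proof -
  note hom = subst_inv_mult subst_inv_diff subst_inv_cst subst_inv_X subst_inv_power subst_inv_one
    total_order_ge_tshift subst_inv_tshift[OF assms(4-6)]
  show ?thesis
    using arg_cong[where f = subst_inv, OF conjunct1[OF assms(1)[unfolded qPA1_rel_def]]]
      arg_cong[where f = subst_inv, OF conjunct2[OF assms(1)[unfolded qPA1_rel_def]]] assms(2,3)
    unfolding qPA1_rel_def by (simp add: hom)
qed

lemma reciprocal_first_equation:
  fixes F G Fb f g fb t q B1 B2 B3 B4 B5 B6 B7 B8 :: "'k::field"
  assumes hf: "F*f = t" and hg: "G*g = t" and hfb: "Fb*fb = q*t" and t: "t \<noteq> 0" and q: "q \<noteq> 0"
    and nz: "B1 \<noteq> 0" "B2 \<noteq> 0" "B3 \<noteq> 0" "B4 \<noteq> 0" "B5 \<noteq> 0" "B6 \<noteq> 0" "B7 \<noteq> 0" "B8 \<noteq> 0"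
    and qB: "q*(B5*B6*B7*B8) = B1*B2*B3*B4"
    and E: "(G*F - t^2) * (G*Fb - q*t^2) * (G - inverse B1) * (G - inverse B2) * (G - inverse B3) * (G - inverse B4)
          = (G*F - 1) * (G*Fb - 1) * (G - inverse B5 * t) * (G - inverse B6 * t) * (G - inverse B7 * t) * (G - inverse B8 * t)"
  shows "(g*f - t^2) * (g*fb - q*t^2) * (g - B5) * (g - B6) * (g - B7) * (g - B8)
       = (g*f - 1) * (g*fb - 1) * (g - B1*t) * (g - B2*t) * (g - B3*t) * (g - B4*t)"
proof -
  have f0: "f \<noteq> 0" using hf t by auto
  have g0: "g \<noteq> 0" using hg t by auto
  have fb0: "fb \<noteq> 0" using hfb t q by auto
  have F: "F = t/f" using hf f0 by (simp add: field_simps)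
  have G: "G = t/g" using hg g0 by (simp add: field_simps)
  have Fb: "Fb = q*t/fb" using hfb fb0 by (simp add: field_simps)
  have a1: "G*F - t^2 = t^2*(1 - g*f)/(g*f)" unfolding F G using f0 g0 by (simp add: field_simps power2_eq_square)
  have a2: "G*Fb - q*t^2 = q*t^2*(1 - g*fb)/(g*fb)" unfolding Fb G using fb0 g0 by (simp add: field_simps power2_eq_square)
  have a3: "\<And>B. B \<noteq> 0 \<Longrightarrow> G - inverse B = - (g - B*t)/(g*B)" unfolding G using g0 by (simp add: field_simps)
  have a4: "G*F - 1 = - (g*f - t^2)/(g*f)" unfolding F G using f0 g0 by (simp add: field_simps power2_eq_square)
  have a5: "G*Fb - 1 = - (g*fb - q*t^2)/(g*fb)" unfolding Fb G using fb0 g0 by (simp add: field_simps power2_eq_square)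
  have a6: "\<And>B. B \<noteq> 0 \<Longrightarrow> G - inverse B * t = - t*(g - B)/(g*B)" unfolding G using g0 by (simp add: field_simps)
  txt \<open>Each factor of E is a factor of the goal times a monomial; by qB the monomials agree.\<close>
  define P where "P = (g*f - t^2) * (g*fb - q*t^2) * (g - B5) * (g - B6) * (g - B7) * (g - B8)"
  define Q where "Q = (g*f - 1) * (g*fb - 1) * (g - B1*t) * (g - B2*t) * (g - B3*t) * (g - B4*t)"
  have "(t^2*(1 - g*f)/(g*f)) * (q*t^2*(1 - g*fb)/(g*fb)) * (- (g - B1*t)/(g*B1)) * (- (g - B2*t)/(g*B2))
        * (- (g - B3*t)/(g*B3)) * (- (g - B4*t)/(g*B4))
      = (- (g*f - t^2)/(g*f)) * (- (g*fb - q*t^2)/(g*fb)) * (- t*(g - B5)/(g*B5)) * (- t*(g - B6)/(g*B6))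
        * (- t*(g - B7)/(g*B7)) * (- t*(g - B8)/(g*B8))"
    using E by (simp only: a1 a2 a4 a5 a3[OF nz(1)] a3[OF nz(2)] a3[OF nz(3)] a3[OF nz(4)]
      a6[OF nz(5)] a6[OF nz(6)] a6[OF nz(7)] a6[OF nz(8)])
  hence "q * t^4 * Q / (g^6*f*fb*(B1*B2*B3*B4)) = t^4 * P / (g^6*f*fb*(B5*B6*B7*B8))"
    unfolding P_def Q_def by (simp add: field_simps power_def eval_nat_numeral)
  hence "q * (B5*B6*B7*B8) * Q = (B1*B2*B3*B4) * P"
    using f0 g0 fb0 t nz by (simp add: field_simps)
  hence "(B1*B2*B3*B4) * Q = (B1*B2*B3*B4) * P" using qB by simp
  thus ?thesis using nz unfolding P_def Q_def by simp
qed

lemma reciprocal_second_equation: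
  fixes Gb G Fb gb g fb t q B1 B2 B3 B4 B5 B6 B7 B8 :: "'k::field"
  assumes hg: "G*g = t" and hgb: "Gb*gb = q*t" and hfb: "Fb*fb = q*t" and t: "t \<noteq> 0" and q: "q \<noteq> 0"
    and nz: "B1 \<noteq> 0" "B2 \<noteq> 0" "B3 \<noteq> 0" "B4 \<noteq> 0" "B5 \<noteq> 0" "B6 \<noteq> 0" "B7 \<noteq> 0" "B8 \<noteq> 0"
    and qB: "q*(B5*B6*B7*B8) = B1*B2*B3*B4"
    and E: "(G*Fb - q*t^2) * (Gb*Fb - q^2*t^2) * (Fb - B1) * (Fb - B2) * (Fb - B3) * (Fb - B4)
          = (G*Fb - 1) * (Gb*Fb - 1) * (Fb - B5*q*t) * (Fb - B6*q*t) * (Fb - B7*q*t) * (Fb - B8*q*t)"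
  shows "(g*fb - q*t^2) * (gb*fb - q^2*t^2) * (fb - inverse B5) * (fb - inverse B6) * (fb - inverse B7) * (fb - inverse B8)
       = (g*fb - 1) * (gb*fb - 1) * (fb - inverse B1*q*t) * (fb - inverse B2*q*t) * (fb - inverse B3*q*t) * (fb - inverse B4*q*t)"
proof -
  have gb0: "gb \<noteq> 0" using hgb t q by auto
  have g0: "g \<noteq> 0" using hg t by auto
  have fb0: "fb \<noteq> 0" using hfb t q by auto
  have Gb: "Gb = q*t/gb" using hgb gb0 by (simp add: field_simps)
  have G: "G = t/g" using hg g0 by (simp add: field_simps)
  have Fb: "Fb = q*t/fb" using hfb fb0 by (simp add: field_simps)
  have a1: "G*Fb - q*t^2 = q*t^2*(1 - g*fb)/(g*fb)" unfolding Fb G using fb0 g0 by (simp add: field_simps power2_eq_square)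
  have a2: "Gb*Fb - q^2*t^2 = q^2*t^2*(1 - gb*fb)/(gb*fb)" unfolding Fb Gb using fb0 gb0 by (simp add: field_simps power2_eq_square)
  have a3: "\<And>B. Fb - B = - (B*fb - q*t)/fb" unfolding Fb using fb0 by (simp add: field_simps)
  have a4: "G*Fb - 1 = - (g*fb - q*t^2)/(g*fb)" unfolding Fb G using fb0 g0 by (simp add: field_simps power2_eq_square)
  have a5: "Gb*Fb - 1 = - (gb*fb - q^2*t^2)/(gb*fb)" unfolding Fb Gb using fb0 gb0 by (simp add: field_simps power2_eq_square)
  have a6: "\<And>B. Fb - B*q*t = - q*t*(B*fb - 1)/fb" unfolding Fb using fb0 by (simp add: field_simps)
  define P where "P = (g*fb - q*t^2) * (gb*fb - q^2*t^2) * (B5*fb - 1) * (B6*fb - 1) * (B7*fb - 1) * (B8*fb - 1)"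
  define Q where "Q = (g*fb - 1) * (gb*fb - 1) * (B1*fb - q*t) * (B2*fb - q*t) * (B3*fb - q*t) * (B4*fb - q*t)"
  have "(q*t^2*(1 - g*fb)/(g*fb)) * (q^2*t^2*(1 - gb*fb)/(gb*fb)) * (- (B1*fb - q*t)/fb) * (- (B2*fb - q*t)/fb)
        * (- (B3*fb - q*t)/fb) * (- (B4*fb - q*t)/fb)
      = (- (g*fb - q*t^2)/(g*fb)) * (- (gb*fb - q^2*t^2)/(gb*fb)) * (- q*t*(B5*fb - 1)/fb) * (- q*t*(B6*fb - 1)/fb)
        * (- q*t*(B7*fb - 1)/fb) * (- q*t*(B8*fb - 1)/fb)"
    using E by (simp only: a1 a2 a4 a5 a6 a3[of B1] a3[of B2] a3[of B3] a3[of B4])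
  hence "q^3 * t^4 * Q / (g*gb*fb^6) = q^4 * t^4 * P / (g*gb*fb^6)"
    unfolding P_def Q_def by (simp add: field_simps power_def eval_nat_numeral)
  hence QP: "Q = q * P"
    using gb0 g0 fb0 t q by (simp add: field_simps eval_nat_numeral)
  have i: "\<And>B. B \<noteq> 0 \<Longrightarrow> fb - inverse B = (B*fb - 1)/B" "\<And>B. B \<noteq> 0 \<Longrightarrow> fb - inverse B*q*t = (B*fb - q*t)/B"
    by (simp_all add: field_simps)
  have "(g*fb - 1) * (gb*fb - 1) * (fb - inverse B1*q*t) * (fb - inverse B2*q*t) * (fb - inverse B3*q*t) * (fb - inverse B4*q*t)
     = Q / (B1*B2*B3*B4)" unfolding Q_def using nz by (simp add: i)
  also have "\<dots> = P / (B5*B6*B7*B8)" using QP qB nz q by (simp add: field_simps)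
  also have "\<dots> = (g*fb - q*t^2) * (gb*fb - q^2*t^2) * (fb - inverse B5) * (fb - inverse B6) * (fb - inverse B7) * (fb - inverse B8)"
    unfolding P_def using nz by (simp add: i)
  finally show ?thesis by simp
qed

lemma qPA1_rel_reciprocal:
  fixes t q :: "'k::field"
  assumes E: "qPA1_rel t q (bdual B) (\<lambda>i. inverse (bdual B i)) F G Fb Gb"
    and "F * f = t" "G * g = t" "Fb * fb = q * t" "Gb * gb = q * t" "t \<noteq> 0" "q \<noteq> 0"
    and "\<forall>i\<in>{1..8}. B i \<noteq> 0" "q * (B 5 * B 6 * B 7 * B 8) = B 1 * B 2 * B 3 * B 4"
  shows "qPA1_rel t q B (\<lambda>i. inverse (B i)) f g fb gb"
proof -
  have nz: "B 1 \<noteq> 0" "B 2 \<noteq> 0" "B 3 \<noteq> 0" "B 4 \<noteq> 0" "B 5 \<noteq> 0" "B 6 \<noteq> 0" "B 7 \<noteq> 0" "B 8 \<noteq> 0"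
    using assms(8) by auto
  note E' = E[unfolded qPA1_rel_def]
  show ?thesis
    unfolding qPA1_rel_def
  proof
    show "(g * f - t^2) * (g * fb - q * t^2) * (g - B 5) * (g - B 6) * (g - B 7) * (g - B 8)
      = (g * f - 1) * (g * fb - 1) * (g - B 1 * t) * (g - B 2 * t) * (g - B 3 * t) * (g - B 4 * t)"
      by (rule reciprocal_first_equation[OF assms(2,3,4,6,7) nz assms(9)])
         (use conjunct1[OF E'] in \<open>simp add: bdual_def\<close>)
    show "(g * fb - q * t^2) * (gb * fb - q^2 * t^2)
        * (fb - inverse (B 5)) * (fb - inverse (B 6)) * (fb - inverse (B 7)) * (fb - inverse (B 8))
      = (g * fb - 1) * (gb * fb - 1) * (fb - inverse (B 1) * q * t) * (fb - inverse (B 2) * q * t)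
        * (fb - inverse (B 3) * q * t) * (fb - inverse (B 4) * q * t)"
      by (rule reciprocal_second_equation[OF assms(3,5,4,6,7) nz assms(9)])
         (use conjunct2[OF E'] in \<open>simp add: bdual_def\<close>)
  qed
qed

lemma qPA1_rel_cst_iff_fls:
  fixes f g fb gb :: "'a::field fls fps"
  shows "qPA1_rel fps_X (cst q) (\<lambda>i. cst (B i)) (\<lambda>i. cst (inverse (B i))) f g fb gb \<longleftrightarrow>
    qPA1_rel fls_X (fls_const (fls_const q)) (\<lambda>i. fls_const (fls_const (B i)))
      (\<lambda>i. inverse (fls_const (fls_const (B i))))
      (fps_to_fls f) (fps_to_fls g) (fps_to_fls fb) (fps_to_fls gb)"
  using qPA1_rel_fps_to_fls_iff[of fps_X "cst q" "\<lambda>i. cst (B i)" "\<lambda>i. cst (inverse (B i))"]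
  by (simp add: o_def cst_def fls_inverse_const)

lemma qPA1_rel_reciprocal_fps:
  fixes F G f g :: "'a::field fls fps"
  assumes E: "qPA1_rel fps_X (cst q) (\<lambda>i. cst (bdual b i)) (\<lambda>i. cst (inverse (bdual b i)))
      F G (tshift q l F) (tshift q l G)"
    and Ff: "F * f = fps_X" and Gg: "G * g = fps_X" and "l \<noteq> 0" "q \<noteq> 0"
    and "\<forall>i\<in>{1..8}. b i \<noteq> 0" "q * (b 5 * b 6 * b 7 * b 8) = b 1 * b 2 * b 3 * b 4"
  shows "qPA1_rel fps_X (cst q) (\<lambda>i. cst (b i)) (\<lambda>i. cst (inverse (b i)))
      f g (tshift q l f) (tshift q l g)"
proof -
  let ?K = "\<lambda>c. fls_const (fls_const c) :: 'a fls fls"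
  have "bdual (\<lambda>i. ?K (b i)) = (\<lambda>i. ?K (bdual b i))"
    by (auto simp: bdual_def fls_inverse_const)
  then have E_fls: "qPA1_rel fls_X (?K q) (bdual (\<lambda>i. ?K (b i)))
      (\<lambda>i. inverse (bdual (\<lambda>i. ?K (b i)) i))
      (fps_to_fls F) (fps_to_fls G) (fps_to_fls (tshift q l F)) (fps_to_fls (tshift q l G))"
    using E by (simp add: qPA1_rel_cst_iff_fls)
  have "tshift q l F * tshift q l f = cst q * fps_X" "tshift q l G * tshift q l g = cst q * fps_X"
    using Ff Gg \<open>l \<noteq> 0\<close> by (metis tshift_mult tshift_X)+
  then have Fbfb: "fps_to_fls (tshift q l F) * fps_to_fls (tshift q l f) = ?K q * fls_X"
      and Gbgb: "fps_to_fls (tshift q l G) * fps_to_fls (tshift q l g) = ?K q * fls_X"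
    by (metis cst_def fls_times_fps_to_fls fps_X_to_fls fps_const_to_fls)+
  have Ff_fls: "fps_to_fls F * fps_to_fls f = fls_X" and Gg_fls: "fps_to_fls G * fps_to_fls g = fls_X"
    using Ff Gg by (simp_all flip: fls_times_fps_to_fls)
  have "\<forall>i\<in>{1..8}. ?K (b i) \<noteq> 0"
    using assms(6) by simp
  moreover have "?K q * (?K (b 5) * ?K (b 6) * ?K (b 7) * ?K (b 8))
      = ?K (b 1) * ?K (b 2) * ?K (b 3) * ?K (b 4)"
    using assms(7) by (simp add: fls_const_mult_const)
  ultimately show ?thesis
    unfolding qPA1_rel_cst_iff_fls using \<open>q \<noteq> 0\<close>
    by (intro qPA1_rel_reciprocal[OF E_fls Ff_fls Gg_fls Fbfb Gbgb]) simp_all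
qed

lemma reciprocal_subst_inv:
  fixes f :: "'a::field fls fps"
  assumes "admissible f" "coef f 1 1 \<noteq> 0"
  shows "subst_inv f * (fps_X * inverse (subst_inv f)) = fps_X"
    and "admissible (fps_X * inverse (subst_inv f))"
    and "coef (fps_X * inverse (subst_inv f)) 1 1 = inverse (coef f 1 1)"
proof -
  have order: "total_order_ge 1 (subst_inv f)" and lead: "subst_inv f $ 0 $$ 1 \<noteq> 0"
    using assms by (simp_all add: total_order_ge_1_subst_inv subst_inv_nth_0_1)
  then have "subst_inv f $ 0 \<noteq> 0"
    by auto
  then show reciprocal: "subst_inv f * (fps_X * inverse (subst_inv f)) = fps_X"
    by (metis inverse_mult_eq_1' mult.commute mult.left_neutral mult.left_commute)
  show "admissible (fps_X * inverse (subst_inv f))"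
    using admissible_if_times_eq_X[OF reciprocal order lead] .
  show "coef (fps_X * inverse (subst_inv f)) 1 1 = inverse (coef f 1 1)"
    using coef_X_times_inverse[OF order lead] by (simp add: subst_inv_nth_0_1)
qed

lemma qpar_bdual: "\<forall>i\<in>{1..8}. b i \<noteq> 0 \<Longrightarrow> qpar (bdual b) = qpar b"
  by (simp add: qpar_def bdual_def field_simps)

lemma lampar_bdual:
  assumes "\<Lambda> \<noteq> 0" "\<forall>i\<in>{1..8}. b i \<noteq> 0"
  shows "lampar \<Lambda> b = inverse (qpar b * lampar (inverse \<Lambda>) (bdual b))"
  using assms by (simp add: lampar_def qpar_def bdual_def field_simps)

lemma sol0plus_reciprocal:
  fixes fd gd :: "'a::field fls fps"
  assumes sol: "sol0plus (inverse \<Lambda>) (bdual b) (fd, gd)"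
    and \<Lambda>: "\<Lambda> \<noteq> 0" and b: "\<forall>i\<in>{1..8}. b i \<noteq> 0"
  shows "sol0plus \<Lambda> b (fps_X * inverse (subst_inv fd), fps_X * inverse (subst_inv gd))"
proof -
  define q l l' where "q = qpar b" and "l = lampar \<Lambda> b" and "l' = lampar (inverse \<Lambda>) (bdual b)"
  have adm: "admissible fd" "admissible gd" and norm: "coef fd 1 1 = 1" "coef gd 1 1 = inverse \<Lambda>"
    and E: "qPA1 (inverse \<Lambda>) (bdual b) fd gd"
    using sol by (simp_all add: sol0plus_def)
  have q: "q \<noteq> 0" and l: "l \<noteq> 0" and l': "l' \<noteq> 0"
    using \<Lambda> b by (auto simp: q_def l_def l'_def qpar_def lampar_def bdual_def)
  have "qPA1_rel fps_X (cst q) (\<lambda>i. cst (bdual b i)) (\<lambda>i. cst (inverse (bdual b i)))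
      fd gd (tshift q l' fd) (tshift q l' gd)"
    using E b by (simp only: qPA1_iff_qPA1_rel qpar_bdual q_def l'_def)
  then have "qPA1_rel fps_X (cst q) (\<lambda>i. cst (bdual b i)) (\<lambda>i. cst (inverse (bdual b i)))
      (subst_inv fd) (subst_inv gd) (tshift q l (subst_inv fd)) (tshift q l (subst_inv gd))"
    using adm q l' lampar_bdual[OF \<Lambda> b]
    by (intro qPA1_rel_subst_inv[where l' = l']) (simp_all add: admissible_total_order_ge q_def l_def l'_def)
  moreover have "subst_inv fd * (fps_X * inverse (subst_inv fd)) = fps_X"
    and "subst_inv gd * (fps_X * inverse (subst_inv gd)) = fps_X"
    using adm norm \<Lambda> by (simp_all add: reciprocal_subst_inv(1))
  moreover have "q * (b 5 * b 6 * b 7 * b 8) = b 1 * b 2 * b 3 * b 4"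
    using b by (simp add: q_def qpar_def)
  ultimately have "qPA1 \<Lambda> b (fps_X * inverse (subst_inv fd)) (fps_X * inverse (subst_inv gd))"
    unfolding qPA1_iff_qPA1_rel q_def[symmetric] l_def[symmetric]
    using qPA1_rel_reciprocal_fps l q b by blast
  moreover have "coef (fps_X * inverse (subst_inv fd)) 1 1 = 1"
    and "coef (fps_X * inverse (subst_inv gd)) 1 1 = \<Lambda>"
    using reciprocal_subst_inv(3)[of fd] reciprocal_subst_inv(3)[of gd] adm norm \<Lambda> by simp_all
  ultimately show ?thesis
    using adm norm \<Lambda> by (simp add: sol0plus_def reciprocal_subst_inv(2))
qed

theorem mainTheorem6:
  fixes \<Lambda> :: "'a::field" and b :: "nat \<Rightarrow> 'a"
  assumes "\<Lambda> \<noteq> 0"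
    and "\<forall>i\<in>{1..8}. b i \<noteq> 0"
    and "\<exists>!p. sol0plus \<Lambda> b p"
    and "\<exists>!p. sol0plus (inverse \<Lambda>) (bdual b) p"
  shows "f0plus \<Lambda> b * subst_inv (f0plus (inverse \<Lambda>) (bdual b)) = fps_X
         \<and> g0plus \<Lambda> b * subst_inv (g0plus (inverse \<Lambda>) (bdual b)) = fps_X"
proof -
  define fd gd where "fd = f0plus (inverse \<Lambda>) (bdual b)" and "gd = g0plus (inverse \<Lambda>) (bdual b)"
  have dual: "sol0plus (inverse \<Lambda>) (bdual b) (fd, gd)"
    using theI'[OF assms(4)] by (simp add: fd_def gd_def f0plus_def g0plus_def)
  then have "sol0plus \<Lambda> b (fps_X * inverse (subst_inv fd), fps_X * inverse (subst_inv gd))"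
    using assms(1,2) by (rule sol0plus_reciprocal)
  then have "f0plus \<Lambda> b = fps_X * inverse (subst_inv fd)"
    and "g0plus \<Lambda> b = fps_X * inverse (subst_inv gd)"
    using the1_equality[OF assms(3)] by (simp_all add: f0plus_def g0plus_def)
  moreover have "subst_inv fd * (fps_X * inverse (subst_inv fd)) = fps_X"
    and "subst_inv gd * (fps_X * inverse (subst_inv gd)) = fps_X"
    using dual assms(1) by (simp_all add: sol0plus_def reciprocal_subst_inv(1))
  ultimately show ?thesis
    unfolding fd_def[symmetric] gd_def[symmetric] by (metis mult.commute)
qed

end
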